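(* Let $A$ be an Archimedean semiprime $f$-algebra which is Dedekind complete. Then every intermediate algebra in $A$ (i.e., every subalgebra of $A$ containing $A_b$) is an order ideal of $A$. In particular, every intermediate algebra in $A$ is a Dedekind complete semiprime $f$-algebra.
   Context: An $f$-algebra is a real associative algebra that is a vector lattice with $A_+A_+\subseteq A_+$ and such that $a\wedge b=0$ implies $ac\wedge b=ca\wedge b=0$ for all $c\in A_+$; it is semiprime if $0$ is its only nilpotent element. $A_b=\{a\in A: a^2\le\mu|a|\text{ for some }\mu\in(0,\infty)\}$ is the set of bounded elements. An order ideal is a solid vector subspace. *)

theory Defs
  imports Complex_Main
begin

text \<open>Ambient structure: a type of class real_algebra (real associative algebra,
not necessarily unital) whose order makes it an ordered real vector space and a
lattice, i.e. a real vector lattice (Riesz space).  All notions below are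
relativised to a carrier set S (S = UNIV for A itself).\<close>

definition vabs :: "'a::{lattice, ab_group_add} \<Rightarrow> 'a" where
  "vabs a = sup a (- a)"

definition subalgebra :: "'a::real_algebra set \<Rightarrow> bool" where
  "subalgebra S \<longleftrightarrow> 0 \<in> S \<and> (\<forall>x\<in>S. \<forall>y\<in>S. x + y \<in> S)
     \<and> (\<forall>c::real. \<forall>x\<in>S. c *\<^sub>R x \<in> S) \<and> (\<forall>x\<in>S. \<forall>y\<in>S. x * y \<in> S)"

definition f_algebra_on :: "'a::{real_algebra, ordered_real_vector, lattice} set \<Rightarrow> bool" where
  "f_algebra_on S \<longleftrightarrow> subalgebra S
     \<and> (\<forall>a\<in>S. \<forall>b\<in>S. inf a b \<in> S \<and> sup a b \<in> S)
     \<and> (\<forall>a\<in>S. \<forall>b\<in>S. 0 \<le> a \<longrightarrow> 0 \<le> b \<longrightarrow> 0 \<le> a * b)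
     \<and> (\<forall>a\<in>S. \<forall>b\<in>S. \<forall>c\<in>S. inf a b = 0 \<and> 0 \<le> c \<longrightarrow>
            inf (a * c) b = 0 \<and> inf (c * a) b = 0)"

definition archimedean_on :: "'a::{real_vector, order} set \<Rightarrow> bool" where
  "archimedean_on S \<longleftrightarrow> (\<forall>x\<in>S. \<forall>y\<in>S. 0 \<le> x \<and> (\<forall>n::nat. real n *\<^sub>R x \<le> y) \<longrightarrow> x = 0)"

definition dedekind_complete_on :: "'a::order set \<Rightarrow> bool" where
  "dedekind_complete_on S \<longleftrightarrow> (\<forall>X\<subseteq>S. X \<noteq> {} \<and> (\<exists>u\<in>S. \<forall>x\<in>X. x \<le> u) \<longrightarrow>
     (\<exists>s\<in>S. (\<forall>x\<in>X. x \<le> s) \<and> (\<forall>u\<in>S. (\<forall>x\<in>X. x \<le> u) \<longrightarrow> s \<le> u)))"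

text \<open>a is nilpotent iff a^(n+1) = 0 for some n (powers without a unit).\<close>
definition nilpotent :: "'a::ring \<Rightarrow> bool" where
  "nilpotent a \<longleftrightarrow> (\<exists>n. (((*) a) ^^ n) a = 0)"

definition semiprime_on :: "'a::ring set \<Rightarrow> bool" where
  "semiprime_on S \<longleftrightarrow> (\<forall>a\<in>S. nilpotent a \<longrightarrow> a = 0)"

definition bounded_elements :: "'a::{real_algebra, ordered_real_vector, lattice} set" where
  "bounded_elements = {a. \<exists>\<mu>::real. 0 < \<mu> \<and> a * a \<le> \<mu> *\<^sub>R vabs a}"

definition order_ideal :: "'a::{real_algebra, ordered_real_vector, lattice} set \<Rightarrow> bool" where
  "order_ideal S \<longleftrightarrow> 0 \<in> S \<and> (\<forall>x\<in>S. \<forall>y\<in>S. x + y \<in> S) \<and> (\<forall>c::real. \<forall>x\<in>S. c *\<^sub>R x \<in> S)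
     \<and> (\<forall>x\<in>S. \<forall>y. vabs y \<le> vabs x \<longrightarrow> y \<in> S)"

definition intermediate_algebra :: "'a::{real_algebra, ordered_real_vector, lattice} set \<Rightarrow> bool" where
  "intermediate_algebra B \<longleftrightarrow> subalgebra B \<and> bounded_elements \<subseteq> B"

end

(*
  In an Archimedean f-algebra multiplication is commutative: for a, b >= 0, comparing b
  with the multiples (k/n) a shows that |ab - ba| lies below (2/n) a^2 + P and below
  (2/n) b^2 + Q for two disjoint error terms P and Q, hence below (2/n)(a^2 + b^2) for
  every n.  If A is moreover semiprime and Dedekind complete, then for v, y >= 0 the
  supremum q of all z >= 0 with z + v z <= y solves q + v q = y; semiprimeness (x^2 = 0
  only for x = 0) is what rules out a gap on either side.

  Now let B be an intermediate algebra, x in B and 0 <= y <= |x|.  Solving q + x^2 q = y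
  gives q + |x|^2 q <= |x|, which forces q^2 <= q.  So q is a bounded element, hence in B,
  and y = q + x^2 q lies in B.  Thus B is solid, i.e. an order ideal, and the remaining
  properties pass from A to the order ideal B.
*)

theory Submission
  imports Defs "HOL-Library.Lattice_Algebras"
begin

(* lgroup.nprt x = inf x 0 is nonpositive: the usual negative part x\<^sup>- is - lgroup.nprt x. *)
interpretation lgroup: lattice_ab_group_add_abs vabs "(+)" "0::'a::{ordered_ab_group_add,lattice}"
    "(-)" uminus "(\<le>)" "(<)" inf sup
  by unfold_locales (simp add: vabs_def)

lemma inf_pprt_neg_nprt:
  "inf (lgroup.pprt x) (- lgroup.nprt x) = (0::'a::{ordered_ab_group_add,lattice})"
proof -
  have "- lgroup.nprt x = lgroup.pprt x + - x"
    using lgroup.prts[of x] by (simp add: algebra_simps)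
  then have "inf (lgroup.pprt x) (- lgroup.nprt x) = lgroup.pprt x + inf 0 (- x)"
    by (simp add: lgroup.add_inf_distrib_left)
  also have "inf 0 (- x) = - sup 0 x"
    using lgroup.neg_sup_eq_inf[of 0 x] by simp
  also have "lgroup.pprt x + - sup 0 x = 0"
    unfolding lgroup.pprt_def sup_commute[of x 0] by (rule right_minus)
  finally show ?thesis .
qed

lemma prts_diff_if_inf_eq_0:
  fixes p n :: "'a::{ordered_ab_group_add,lattice}"
  assumes "inf p n = 0"
  shows "lgroup.pprt (p - n) = p" "lgroup.nprt (p - n) = - n"
proof -
  have "sup p n = p + n"
    using lgroup.add_eq_inf_sup[of p n] assms by simp
  then have "lgroup.pprt (p - n) = p"
    using lgroup.add_sup_distrib_right[of p n "- n"] by (simp add: lgroup.pprt_def)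
  then show "lgroup.pprt (p - n) = p" "lgroup.nprt (p - n) = - n"
    using lgroup.prts[of "p - n"] by (simp_all add: algebra_simps add_eq_0_iff)
qed

lemma pprt_diff_le:
  fixes a b :: "'a::{ordered_ab_group_add,lattice}"
  assumes "0 \<le> a" "0 \<le> b"
  shows "lgroup.pprt (a - b) \<le> a"
  using assms by (simp add: lgroup.pprt_def)

lemma pprt_le_0_iff: "lgroup.pprt x \<le> 0 \<longleftrightarrow> x \<le> (0::'a::{ordered_ab_group_add,lattice})"
  by (simp add: lgroup.pprt_def)

lemma inf_add_le_add_inf:
  fixes u v w :: "'a::{ordered_ab_group_add,lattice}"
  assumes "0 \<le> u" "0 \<le> v" "0 \<le> w"
  shows "inf u (v + w) \<le> inf u v + inf u w"
proof -
  have "inf u (v + w) \<le> inf (u + w) (v + w)"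
    using assms by (intro inf_mono) (simp_all add: add_increasing2)
  moreover have "inf u (v + w) \<le> inf (u + u) (v + u)"
    using assms by (intro le_infI) (simp_all add: le_infI1 le_infI2 add_increasing2)
  ultimately have "inf u (v + w) \<le> inf (inf u v + u) (inf u v + w)"
    by (simp add: lgroup.add_inf_distrib_right)
  also have "\<dots> = inf u v + inf u w"
    by (simp add: lgroup.add_inf_distrib_left inf_commute)
  finally show ?thesis .
qed

lemma inf_eq_0_nonneg:
  fixes u v :: "'a::{ordered_ab_group_add,lattice}"
  assumes "inf u v = 0"
  shows "0 \<le> u" "0 \<le> v"
  using assms by (metis inf.bounded_iff order_refl)+

lemma inf_add_right_eq_0:
  fixes u v w :: "'a::{ordered_ab_group_add,lattice}"
  assumes "inf u v = 0" "inf u w = 0"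
  shows "inf u (v + w) = 0"
  using inf_add_le_add_inf[of u v w] inf_eq_0_nonneg[OF assms(1)] inf_eq_0_nonneg[OF assms(2)] assms
  by (simp add: antisym)

lemma inf_add_left_eq_0:
  fixes u v w :: "'a::{ordered_ab_group_add,lattice}"
  assumes "inf u w = 0" "inf v w = 0"
  shows "inf (u + v) w = 0"
  using inf_add_right_eq_0[of w u v] assms by (simp add: inf_commute)

lemma inf_diff_inf_eq_0: "inf (a - inf a b) (b - inf a b) = (0::'a::{ordered_ab_group_add,lattice})"
  by (metis lgroup.add_inf_distrib_right diff_conv_add_uminus right_minus)

lemma vabs_le_if_between:
  fixes a s b :: "'a::{ordered_ab_group_add,lattice}"
  assumes "a \<le> s" "s \<le> b"
  shows "vabs s \<le> vabs a + vabs b"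
proof -
  have "s \<le> vabs a + vabs b"
    using assms(2) lgroup.abs_ge_self[of b] add_increasing[OF lgroup.abs_ge_zero[of a]]
    by (meson order_trans)
  moreover have "- s \<le> vabs a + vabs b"
    using assms(1) lgroup.abs_ge_minus_self[of a] add_increasing2[OF lgroup.abs_ge_zero[of b]]
    by (meson neg_le_iff_le order_trans)
  ultimately show ?thesis by (simp add: lgroup.abs_le_iff)
qed

lemma vabs_inf_le: "vabs (inf a b) \<le> vabs a + vabs (b::'a::{ordered_ab_group_add,lattice})"
proof -
  have "inf a b \<le> vabs a + vabs b"
    using lgroup.abs_ge_self[of a] add_increasing2[OF lgroup.abs_ge_zero[of b]]
    by (meson le_infI1 order_trans)
  moreover have "- inf a b \<le> vabs a + vabs b"
    using lgroup.abs_ge_minus_self[of a] lgroup.abs_ge_minus_self[of b]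
      add_increasing[OF lgroup.abs_ge_zero[of a]] add_increasing2[OF lgroup.abs_ge_zero[of b]]
    by (auto simp: lgroup.neg_inf_eq_sup intro: order_trans)
  ultimately show ?thesis by (simp add: lgroup.abs_le_iff)
qed

lemma vabs_sup_le: "vabs (sup a b) \<le> vabs a + vabs (b::'a::{ordered_ab_group_add,lattice})"
  using vabs_inf_le[of "- a" "- b"] by (simp flip: lgroup.neg_sup_eq_inf)

lemma scaleR_inf_distrib:
  fixes u v :: "'a::{ordered_real_vector,lattice}"
  assumes "0 \<le> c"
  shows "c *\<^sub>R inf u v = inf (c *\<^sub>R u) (c *\<^sub>R v)"
proof (cases "c = 0")
  case False
  then have c: "0 < c" using assms by simp
  show ?thesis
  proof (rule antisym)
    show "c *\<^sub>R inf u v \<le> inf (c *\<^sub>R u) (c *\<^sub>R v)"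
      using assms by (simp add: scaleR_left_mono)
    have "inverse c *\<^sub>R inf (c *\<^sub>R u) (c *\<^sub>R v) \<le> inverse c *\<^sub>R (c *\<^sub>R u)"
      and "inverse c *\<^sub>R inf (c *\<^sub>R u) (c *\<^sub>R v) \<le> inverse c *\<^sub>R (c *\<^sub>R v)"
      using c by (intro scaleR_left_mono; simp)+
    then have "inverse c *\<^sub>R inf (c *\<^sub>R u) (c *\<^sub>R v) \<le> inf u v"
      using c by simp
    then have "c *\<^sub>R (inverse c *\<^sub>R inf (c *\<^sub>R u) (c *\<^sub>R v)) \<le> c *\<^sub>R inf u v"
      using c by (intro scaleR_left_mono) auto
    then show "inf (c *\<^sub>R u) (c *\<^sub>R v) \<le> c *\<^sub>R inf u v"
      using c by simp
  qed
qed simp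

lemma inf_scaleR_eq_0:
  fixes u v :: "'a::{ordered_real_vector,lattice}"
  assumes "inf u v = 0" "0 \<le> c"
  shows "inf (c *\<^sub>R u) v = 0"
proof -
  have uv: "0 \<le> u" "0 \<le> v" using inf_eq_0_nonneg[OF assms(1)] .
  have "inf (c *\<^sub>R u) v \<le> inf ((c + 1) *\<^sub>R u) ((c + 1) *\<^sub>R v)"
    using uv assms(2)
    by (intro inf_mono scaleR_right_mono) (auto simp: scaleR_add_left scaleR_nonneg_nonneg)
  also have "\<dots> = 0"
    using assms by (simp flip: scaleR_inf_distrib)
  finally have "inf (c *\<^sub>R u) v \<le> 0" .
  moreover have "0 \<le> inf (c *\<^sub>R u) v"
    using uv assms(2) by (simp add: scaleR_nonneg_nonneg)
  ultimately show ?thesis by (rule antisym)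
qed

lemma inf_vabs_diff_le:
  fixes x e :: "'a::{ordered_ab_group_add,lattice}"
  assumes "0 \<le> e"
  shows "inf (e + lgroup.pprt x) (vabs (x - e)) \<le> e + lgroup.pprt (x - e)"
proof -
  define u where "u = e + lgroup.pprt x"
  have "- lgroup.nprt (x - e) \<le> e + - lgroup.nprt x"
    using assms by (auto simp: lgroup.nprt_def lgroup.neg_inf_eq_sup intro: add_increasing)
  then have "inf u (- lgroup.nprt (x - e)) \<le> inf (e + lgroup.pprt x) (e + - lgroup.nprt x)"
    unfolding u_def by (rule inf_mono[OF order_refl])
  also have "\<dots> = e + inf (lgroup.pprt x) (- lgroup.nprt x)"
    by (simp only: lgroup.add_inf_distrib_left)
  also have "\<dots> = e"
    by (simp add: inf_pprt_neg_nprt)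
  finally have "inf u (- lgroup.nprt (x - e)) \<le> e" .
  moreover have "0 \<le> u"
    using assms by (simp add: u_def)
  ultimately have "inf u (lgroup.pprt (x - e) + - lgroup.nprt (x - e)) \<le> lgroup.pprt (x - e) + e"
    using inf_add_le_add_inf[of u] by (meson add_mono inf.cobounded2 lgroup.nprt_le_zero
        lgroup.zero_le_pprt neg_0_le_iff_le order_trans)
  then show ?thesis
    by (simp add: u_def lgroup.abs_prts add.commute)
qed

fun grid_distance :: "'a::{ordered_real_vector,lattice} \<Rightarrow> 'a \<Rightarrow> real \<Rightarrow> nat \<Rightarrow> 'a" where
  "grid_distance a b e 0 = vabs b"
| "grid_distance a b e (Suc k) = inf (grid_distance a b e k) (vabs (b - (real (Suc k) * e) *\<^sub>R a))"

lemma grid_distance_le: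
  fixes a b :: "'a::{ordered_real_vector,lattice}"
  assumes "0 \<le> a" "0 \<le> b" "0 \<le> e"
  shows "grid_distance a b e k \<le> e *\<^sub>R a + lgroup.pprt (b - (real k * e) *\<^sub>R a)"
proof (induction k)
  case 0
  then show ?case
    using assms by (simp add: lgroup.abs_of_nonneg scaleR_nonneg_nonneg)
next
  case (Suc k)
  define x where "x = b - (real k * e) *\<^sub>R a"
  have x: "b - (real (Suc k) * e) *\<^sub>R a = x - e *\<^sub>R a"
    by (simp add: x_def algebra_simps)
  have "grid_distance a b e (Suc k) = inf (grid_distance a b e k) (vabs (x - e *\<^sub>R a))"
    by (simp only: grid_distance.simps x)
  also have "\<dots> \<le> inf (e *\<^sub>R a + lgroup.pprt x) (vabs (x - e *\<^sub>R a))"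
    using Suc.IH unfolding x_def by (rule inf_mono) simp
  also have "\<dots> \<le> e *\<^sub>R a + lgroup.pprt (x - e *\<^sub>R a)"
    using assms by (intro inf_vabs_diff_le scaleR_nonneg_nonneg)
  finally show ?case
    by (simp only: x)
qed

lemma bounded_elementsI: "0 \<le> q \<Longrightarrow> q * q \<le> q \<Longrightarrow> q \<in> bounded_elements"
  unfolding bounded_elements_def by (auto simp: lgroup.abs_of_nonneg intro: exI[of _ 1])

definition anticommutator :: "'a::ring \<Rightarrow> 'a \<Rightarrow> 'a" where
  "anticommutator a u = a * u + u * a"

lemma anticommutator_add: "anticommutator a (u + v) = anticommutator a u + anticommutator a v"
  by (simp add: anticommutator_def algebra_simps)

lemma anticommutator_scaleR:
  "anticommutator a (c *\<^sub>R u) = c *\<^sub>R anticommutator a (u::'a::real_algebra)"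
  by (simp add: anticommutator_def scaleR_add_right)

context
  assumes f_algebra: "f_algebra_on (UNIV :: 'a::{real_algebra,ordered_real_vector,lattice} set)"
begin

lemma f_mult_nonneg: "0 \<le> a \<Longrightarrow> 0 \<le> b \<Longrightarrow> 0 \<le> a * (b::'a)"
  using f_algebra by (simp add: f_algebra_on_def)

lemma f_mult_left_mono: "a \<le> b \<Longrightarrow> 0 \<le> c \<Longrightarrow> c * a \<le> c * (b::'a)"
  using f_mult_nonneg[of c "b - a"] by (simp add: right_diff_distrib)

lemma f_mult_right_mono: "a \<le> b \<Longrightarrow> 0 \<le> c \<Longrightarrow> a * c \<le> b * (c::'a)"
  using f_mult_nonneg[of "b - a" c] by (simp add: left_diff_distrib)

lemma f_inf_mult_right_eq_0: "inf a b = 0 \<Longrightarrow> 0 \<le> c \<Longrightarrow> inf (a * c) (b::'a) = 0"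
  and f_inf_mult_left_eq_0: "inf a b = 0 \<Longrightarrow> 0 \<le> c \<Longrightarrow> inf (c * a) (b::'a) = 0"
  using f_algebra unfolding f_algebra_on_def by blast+

lemma f_inf_mult_mult_eq_0:
  assumes "inf u v = 0" "0 \<le> x" "0 \<le> y"
  shows "inf (x * u) (y * v) = 0" "inf (x * u) (v * y) = 0"
    and "inf (u * x) (y * v) = 0" "inf (u * x) (v * y) = (0::'a)"
proof -
  have "inf p (y * v) = 0 \<and> inf p (v * y) = 0" if "inf p v = 0" for p
    using f_inf_mult_left_eq_0[of v p y] f_inf_mult_right_eq_0[of v p y] that assms(3)
    by (simp add: inf_commute)
  then show "inf (x * u) (y * v) = 0" "inf (x * u) (v * y) = 0"
    and "inf (u * x) (y * v) = 0" "inf (u * x) (v * y) = 0"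
    using f_inf_mult_left_eq_0[OF assms(1,2)] f_inf_mult_right_eq_0[OF assms(1,2)] by blast+
qed

lemma f_mult_eq_0_if_inf_eq_0:
  assumes "inf u v = 0"
  shows "u * v = (0::'a)"
proof -
  have "inf (u * v) (u * v) = 0"
    using assms inf_eq_0_nonneg(2,1)[OF assms] by (rule f_inf_mult_mult_eq_0(3))
  then show ?thesis by (simp only: inf.idem)
qed

lemma f_pprt_mult_nprt: "lgroup.pprt x * lgroup.nprt x = (0::'a)"
  and f_nprt_mult_pprt: "lgroup.nprt x * lgroup.pprt x = (0::'a)"
proof -
  have "lgroup.pprt x * - lgroup.nprt x = 0"
    by (rule f_mult_eq_0_if_inf_eq_0[OF inf_pprt_neg_nprt])
  moreover have "- lgroup.nprt x * lgroup.pprt x = 0"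
    by (rule f_mult_eq_0_if_inf_eq_0) (simp add: inf_commute inf_pprt_neg_nprt)
  ultimately show "lgroup.pprt x * lgroup.nprt x = 0" "lgroup.nprt x * lgroup.pprt x = 0"
    by simp_all
qed

lemma f_pprt_mult_left:
  assumes "0 \<le> c"
  shows "lgroup.pprt (c * x) = c * lgroup.pprt x" "lgroup.nprt (c * x) = c * lgroup.nprt (x::'a)"
proof -
  have eq: "c * x = c * lgroup.pprt x - c * - lgroup.nprt x"
    using arg_cong[of _ _ "(*) c", OF lgroup.prts[of x]] by (simp add: distrib_left)
  have "inf (c * lgroup.pprt x) (c * - lgroup.nprt x) = 0"
    using f_inf_mult_mult_eq_0(1)[OF inf_pprt_neg_nprt assms assms] .
  from prts_diff_if_inf_eq_0[OF this]
  show "lgroup.pprt (c * x) = c * lgroup.pprt x" "lgroup.nprt (c * x) = c * lgroup.nprt x"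
    unfolding eq by simp_all
qed

lemma f_pprt_mult_right:
  assumes "0 \<le> c"
  shows "lgroup.pprt (x * c) = lgroup.pprt x * c" "lgroup.nprt (x * c) = lgroup.nprt (x::'a) * c"
proof -
  have eq: "x * c = lgroup.pprt x * c - - lgroup.nprt x * c"
    using arg_cong[of _ _ "\<lambda>y. y * c", OF lgroup.prts[of x]] by (simp add: distrib_right)
  have "inf (lgroup.pprt x * c) (- lgroup.nprt x * c) = 0"
    using f_inf_mult_mult_eq_0(4)[OF inf_pprt_neg_nprt assms assms] .
  from prts_diff_if_inf_eq_0[OF this]
  show "lgroup.pprt (x * c) = lgroup.pprt x * c" "lgroup.nprt (x * c) = lgroup.nprt x * c"
    unfolding eq by simp_all
qed

lemma f_vabs_mult_left: "0 \<le> c \<Longrightarrow> vabs (c * x) = c * vabs (x::'a)"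
  by (simp add: lgroup.abs_prts f_pprt_mult_left right_diff_distrib)

lemma f_vabs_mult_right: "0 \<le> c \<Longrightarrow> vabs (x * c) = vabs (x::'a) * c"
  by (simp add: lgroup.abs_prts f_pprt_mult_right left_diff_distrib)

lemma f_pprt_mult_self: "lgroup.pprt x * x = lgroup.pprt x * lgroup.pprt (x::'a)"
proof -
  have "lgroup.pprt x * x = lgroup.pprt x * (lgroup.pprt x + lgroup.nprt x)"
    by (simp flip: lgroup.prts)
  then show ?thesis
    by (simp add: distrib_left f_pprt_mult_nprt)
qed

lemma f_nprt_mult_self: "lgroup.nprt x * x = lgroup.nprt x * lgroup.nprt (x::'a)"
proof -
  have "lgroup.nprt x * x = lgroup.nprt x * (lgroup.pprt x + lgroup.nprt x)"
    by (simp flip: lgroup.prts)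
  then show ?thesis
    by (simp add: distrib_left f_nprt_mult_pprt)
qed

lemma f_square_prts: "x * x = lgroup.pprt x * lgroup.pprt x + lgroup.nprt x * lgroup.nprt (x::'a)"
proof -
  have "x * x = lgroup.pprt x * x + lgroup.nprt x * x"
    by (metis distrib_right lgroup.prts)
  then show ?thesis
    by (simp only: f_pprt_mult_self f_nprt_mult_self)
qed

lemma f_square_nonneg: "0 \<le> x * (x::'a)"
proof -
  have "0 \<le> lgroup.pprt x * lgroup.pprt x" "0 \<le> - lgroup.nprt x * - lgroup.nprt x"
    by (simp_all only: f_mult_nonneg lgroup.zero_le_pprt neg_0_le_iff_le lgroup.nprt_le_zero)
  then show ?thesis
    by (simp only: f_square_prts[of x] add_nonneg_nonneg mult_minus_left mult_minus_right
        minus_minus)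
qed

lemma f_vabs_square: "vabs x * vabs x = x * (x::'a)"
proof -
  have "vabs x * vabs x = (lgroup.pprt x - lgroup.nprt x) * (lgroup.pprt x - lgroup.nprt x)"
    by (simp only: lgroup.abs_prts)
  also have "\<dots> = lgroup.pprt x * lgroup.pprt x + lgroup.nprt x * lgroup.nprt x"
    by (simp add: left_diff_distrib right_diff_distrib f_pprt_mult_nprt f_nprt_mult_pprt)
  finally show ?thesis
    by (simp only: f_square_prts[of x])
qed

lemma anticommutator_mono: "0 \<le> a \<Longrightarrow> u \<le> v \<Longrightarrow> anticommutator a u \<le> anticommutator a (v::'a)"
  unfolding anticommutator_def by (intro add_mono f_mult_left_mono f_mult_right_mono)

lemma inf_anticommutator_eq_0:
  assumes "inf u v = 0" "0 \<le> a" "0 \<le> b"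
  shows "inf (anticommutator a u) (anticommutator b (v::'a)) = 0"
  unfolding anticommutator_def
  using f_inf_mult_mult_eq_0[OF assms]
  by (intro inf_add_left_eq_0 inf_add_right_eq_0) simp_all

lemma anticommutator_inf:
  assumes "0 \<le> a"
  shows "anticommutator a (inf u v) = inf (anticommutator a u) (anticommutator a (v::'a))"
proof -
  define m where "m = inf u v"
  have "inf (anticommutator a u) (anticommutator a v)
      = inf (anticommutator a m + anticommutator a (u - m))
          (anticommutator a m + anticommutator a (v - m))"
    by (simp flip: anticommutator_add)
  also have "\<dots> = anticommutator a m + inf (anticommutator a (u - m)) (anticommutator a (v - m))"
    by (simp add: lgroup.add_inf_distrib_left)
  also have "inf (anticommutator a (u - m)) (anticommutator a (v - m)) = 0"
    unfolding m_def using assms by (intro inf_anticommutator_eq_0 inf_diff_inf_eq_0)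
  finally show ?thesis by (simp add: m_def)
qed

lemma vabs_commutator_le:
  assumes "0 \<le> a"
  shows "vabs (a * z - z * a) \<le> anticommutator a (vabs (z::'a))"
  using lgroup.abs_triangle_ineq4[of "a * z" "z * a"] assms
  by (simp add: f_vabs_mult_left f_vabs_mult_right anticommutator_def)

lemma vabs_commutator_le_grid_distance:
  assumes "0 \<le> a"
  shows "vabs (a * b - b * a) \<le> anticommutator a (grid_distance a b e k :: 'a)"
proof (induction k)
  case 0
  show ?case using vabs_commutator_le[OF assms, of b] by simp
next
  case (Suc k)
  define t where "t = real (Suc k) * e"
  have "a * (b - t *\<^sub>R a) - (b - t *\<^sub>R a) * a = a * b - b * a"
    by (simp add: algebra_simps)
  then have "vabs (a * b - b * a) \<le> anticommutator a (vabs (b - t *\<^sub>R a))"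
    using vabs_commutator_le[OF assms, of "b - t *\<^sub>R a"] by simp
  then show ?case
    using Suc.IH by (simp add: t_def anticommutator_inf[OF assms])
qed

lemma vabs_commutator_le_pprt:
  fixes n :: nat
  assumes "0 \<le> a" "0 \<le> b" "0 < n"
  shows "vabs (a * b - b * a) \<le> (2 / n) *\<^sub>R (a * a) + anticommutator a (lgroup.pprt (b - a) :: 'a)"
proof -
  have "vabs (a * b - b * a) \<le> anticommutator a (grid_distance a b (1 / n) n)"
    using vabs_commutator_le_grid_distance[OF assms(1)] .
  also have "\<dots> \<le> anticommutator a ((1 / n) *\<^sub>R a + lgroup.pprt (b - a))"
    using grid_distance_le[OF assms(1,2), of "1 / n" n] assms(3)
    by (intro anticommutator_mono[OF assms(1)]) simp
  also have "\<dots> = (2 / n) *\<^sub>R (a * a) + anticommutator a (lgroup.pprt (b - a))"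
  proof -
    have "anticommutator a a = 2 *\<^sub>R (a * a)"
      by (simp add: anticommutator_def scaleR_2)
    then show ?thesis
      by (simp add: anticommutator_add anticommutator_scaleR)
  qed
  finally show ?thesis .
qed

context
  assumes semiprime: "semiprime_on (UNIV :: 'a set)"
begin

lemma square_eq_0_imp_eq_0: "x * x = 0 \<Longrightarrow> x = (0::'a)"
  using semiprime unfolding semiprime_on_def nilpotent_def
  by (metis UNIV_I funpow_0 funpow_Suc_right o_apply One_nat_def)

lemma cube_eq_0_imp_eq_0: "x * (x * x) = 0 \<Longrightarrow> x = (0::'a)"
  using semiprime unfolding semiprime_on_def nilpotent_def
  by (metis UNIV_I funpow_0 funpow_Suc_right o_apply numeral_2_eq_2)

lemma square_le_0_imp_eq_0: "x * x \<le> 0 \<Longrightarrow> x = (0::'a)"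
  using f_square_nonneg[of x] by (auto intro: square_eq_0_imp_eq_0[OF antisym])

lemma inf_eq_0_if_mult_eq_0:
  assumes "0 \<le> u" "0 \<le> v" "u * v = (0::'a)"
  shows "inf u v = 0"
proof -
  define m where "m = inf u v"
  have "m \<le> u" "m \<le> v" "0 \<le> m"
    using assms by (simp_all add: m_def)
  then have "m * m \<le> u * v"
    using assms by (meson f_mult_left_mono f_mult_right_mono order_trans)
  then have "m = 0"
    using assms(3) by (simp add: square_le_0_imp_eq_0)
  then show ?thesis by (simp add: m_def)
qed

lemma nonpos_if_mult_nonpos_dominated:
  assumes "0 \<le> d" "d * x \<le> 0" "0 \<le> w" "0 \<le> c" "lgroup.pprt x \<le> c *\<^sub>R (w * d)"
  shows "x \<le> (0::'a)"
proof -
  have "d * lgroup.pprt x = 0"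
    using assms(2) by (simp add: f_pprt_mult_left[OF assms(1), symmetric])
  then have "inf d (lgroup.pprt x) = 0"
    using assms(1) by (simp add: inf_eq_0_if_mult_eq_0)
  then have "inf (c *\<^sub>R (w * d)) (lgroup.pprt x) = 0"
    using assms(3,4) by (intro inf_scaleR_eq_0 f_inf_mult_left_eq_0)
  then have "lgroup.pprt x = 0"
    using assms(5) by (simp add: inf_absorb2)
  then show ?thesis
    by (simp add: lgroup.le_zero_iff_zero_pprt)
qed

end

context
  assumes archimedean: "archimedean_on (UNIV :: 'a set)"
begin

lemma archimedean_eq_0: "0 \<le> x \<Longrightarrow> (\<And>n::nat. real n *\<^sub>R x \<le> y) \<Longrightarrow> x = (0::'a)"
  using archimedean unfolding archimedean_on_def by blast

lemma scaleR_vabs_commutator_le: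
  assumes a: "0 \<le> a" and b: "0 \<le> b"
  shows "real n *\<^sub>R vabs (a * b - b * a) \<le> 2 *\<^sub>R (a * a + b * (b::'a))"
proof (cases "n = 0")
  case True
  then show ?thesis
    by (simp add: f_square_nonneg scaleR_nonneg_nonneg)
next
  case False
  define P where "P = anticommutator a (lgroup.pprt (b - a))"
  define Q where "Q = anticommutator b (lgroup.pprt (a - b))"
  define X where "X = (2 / n) *\<^sub>R (a * a)"
  define Y where "Y = (2 / n) *\<^sub>R (b * b)"
  have "inf (lgroup.pprt (b - a)) (lgroup.pprt (a - b)) = 0"
    using inf_pprt_neg_nprt[of "b - a"] by (simp add: lgroup.pprt_neg[symmetric])
  then have PQ: "inf P Q = 0"
    unfolding P_def Q_def using a b by (rule inf_anticommutator_eq_0)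
  have XY: "0 \<le> X" "0 \<le> Y"
    by (simp_all add: X_def Y_def f_square_nonneg scaleR_nonneg_nonneg)
  have "vabs (a * b - b * a) \<le> X + P"
    unfolding X_def P_def using a b False by (simp add: vabs_commutator_le_pprt)
  moreover have "vabs (a * b - b * a) \<le> Y + Q"
    using vabs_commutator_le_pprt[OF b a, of n] False lgroup.abs_minus_commute[of "a * b"]
    by (simp add: Y_def Q_def)
  moreover have "X + P \<le> X + Y + P" "Y + Q \<le> X + Y + Q"
    using XY by simp_all
  ultimately have "vabs (a * b - b * a) \<le> inf (X + Y + P) (X + Y + Q)"
    by (meson le_infI order_trans)
  also have "\<dots> = X + Y + inf P Q"
    by (simp add: lgroup.add_inf_distrib_left)
  also have "\<dots> = (1 / n) *\<^sub>R (2 *\<^sub>R (a * a + b * b))"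
    by (simp add: PQ X_def Y_def scaleR_add_right)
  finally have "real n *\<^sub>R vabs (a * b - b * a) \<le> real n *\<^sub>R ((1 / n) *\<^sub>R (2 *\<^sub>R (a * a + b * b)))"
    by (rule scaleR_left_mono) simp
  then show ?thesis
    using False by simp
qed

lemma f_mult_commute_nonneg:
  assumes "0 \<le> a" "0 \<le> b"
  shows "a * b = b * (a::'a)"
  using archimedean_eq_0[OF lgroup.abs_ge_zero scaleR_vabs_commutator_le[OF assms]]
  by (simp add: lgroup.abs_eq_0)

lemma f_mult_commute: "a * b = b * (a::'a)"
proof -
  have "lgroup.pprt a * lgroup.pprt b = lgroup.pprt b * lgroup.pprt a"
    and "- lgroup.nprt a * lgroup.pprt b = lgroup.pprt b * - lgroup.nprt a"
    and "lgroup.pprt a * - lgroup.nprt b = - lgroup.nprt b * lgroup.pprt a"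
    and "- lgroup.nprt a * - lgroup.nprt b = - lgroup.nprt b * - lgroup.nprt a"
    by (rule f_mult_commute_nonneg; simp)+
  moreover have "a * b = (lgroup.pprt a - - lgroup.nprt a) * (lgroup.pprt b - - lgroup.nprt b)"
    and "b * a = (lgroup.pprt b - - lgroup.nprt b) * (lgroup.pprt a - - lgroup.nprt a)"
    by (simp_all flip: lgroup.prts)
  ultimately show ?thesis
    by (simp only: left_diff_distrib right_diff_distrib) (simp add: algebra_simps)
qed

lemma f_mult_left_commute: "a * (b * c) = b * (a * (c::'a))"
  by (metis f_mult_commute mult.assoc)

context
  assumes semiprime: "semiprime_on (UNIV :: 'a set)"
begin

lemma mult_pprt_le_scaleR_pprt:
  assumes d: "0 \<le> d" and v: "0 \<le> v" and t: "0 \<le> t"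
  shows "v * lgroup.pprt (t *\<^sub>R d - v * d) \<le> t *\<^sub>R lgroup.pprt (t *\<^sub>R d - v * (d::'a))"
proof -
  define p where "p = lgroup.pprt (t *\<^sub>R d - v * d)"
  have "d * (v * p - t *\<^sub>R p) = - (p * (t *\<^sub>R d - v * d))"
    by (simp add: algebra_simps f_mult_commute f_mult_left_commute)
  also have "\<dots> = - (p * p)"
    by (simp add: p_def f_pprt_mult_self)
  finally have "d * (v * p - t *\<^sub>R p) \<le> 0"
    using f_square_nonneg[of p] by simp
  moreover have "lgroup.pprt (v * p - t *\<^sub>R p) \<le> t *\<^sub>R (v * d)"
  proof -
    have "0 \<le> p" by (simp add: p_def)
    then have "lgroup.pprt (v * p - t *\<^sub>R p) \<le> v * p"
      using v t by (intro pprt_diff_le f_mult_nonneg scaleR_nonneg_nonneg)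
    also have "v * p \<le> v * (t *\<^sub>R d)"
      unfolding p_def using d v t
      by (intro f_mult_left_mono pprt_diff_le f_mult_nonneg scaleR_nonneg_nonneg)
    finally show ?thesis by simp
  qed
  ultimately have "v * p - t *\<^sub>R p \<le> 0"
    using nonpos_if_mult_nonpos_dominated[OF semiprime d _ v t] by blast
  then show ?thesis by (simp add: p_def)
qed

lemma mult_le_scaleR_if_le:
  assumes e: "0 \<le> e" "e \<le> p" and v: "0 \<le> v" and t: "0 \<le> t" and vp: "v * p \<le> t *\<^sub>R (p::'a)"
  shows "v * e \<le> t *\<^sub>R e"
proof -
  have p: "0 \<le> p" using e by (rule order_trans)
  have "p * (v * e - t *\<^sub>R e) = e * (v * p - t *\<^sub>R p)"
    by (simp add: algebra_simps f_mult_commute f_mult_left_commute)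
  also have "\<dots> \<le> 0"
    using f_mult_left_mono[of "v * p - t *\<^sub>R p" 0 e] vp e(1) by simp
  finally have "p * (v * e - t *\<^sub>R e) \<le> 0" .
  moreover have "lgroup.pprt (v * e - t *\<^sub>R e) \<le> 1 *\<^sub>R (v * p)"
    using pprt_diff_le[of "v * e" "t *\<^sub>R e"] f_mult_left_mono[OF e(2) v]
      f_mult_nonneg[OF v e(1)] scaleR_nonneg_nonneg[OF t e(1)]
    by simp
  ultimately have "v * e - t *\<^sub>R e \<le> 0"
    by (rule nonpos_if_mult_nonpos_dominated[OF semiprime p _ v zero_le_one])
  then show ?thesis by simp
qed

lemma pprt_scaleR_diff_mult_le:
  assumes d: "0 \<le> d" and v: "0 \<le> v" and r: "0 \<le> r" and drv: "d \<le> r + v * r" and t: "0 \<le> t"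
  shows "lgroup.pprt (t *\<^sub>R d - v * d) \<le> (t * (t + 1)) *\<^sub>R (r::'a)"
proof -
  define p where "p = lgroup.pprt (t *\<^sub>R d - v * d)"
  define C where "C = t * (t + 1)"
  define e where "e = lgroup.pprt (p - C *\<^sub>R r)"
  have p: "0 \<le> p" "v * p \<le> t *\<^sub>R p" "p \<le> t *\<^sub>R d"
    unfolding p_def using d v t
    by (simp_all add: mult_pprt_le_scaleR_pprt pprt_diff_le f_mult_nonneg scaleR_nonneg_nonneg)
  have e: "0 \<le> e" "e \<le> p"
    unfolding e_def using p(1) r t by (simp_all add: C_def pprt_diff_le scaleR_nonneg_nonneg)
  have "e * d \<le> e * r + (v * e) * r"
    using f_mult_left_mono[OF drv e(1)] by (simp add: distrib_left f_mult_left_commute mult.assoc)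
  also have "\<dots> \<le> e * r + t *\<^sub>R (e * r)"
    using f_mult_right_mono[OF mult_le_scaleR_if_le[OF e v t p(2)] r] by simp
  finally have ed: "e * d \<le> e * r + t *\<^sub>R (e * r)" .
  have "e * p \<le> t *\<^sub>R (e * d)"
    using f_mult_left_mono[OF p(3) e(1)] by simp
  also have "\<dots> \<le> t *\<^sub>R (e * r + t *\<^sub>R (e * r))"
    using ed t by (rule scaleR_left_mono)
  also have "\<dots> = C *\<^sub>R (e * r)"
    by (simp add: C_def algebra_simps)
  finally have "e * p \<le> C *\<^sub>R (e * r)" .
  moreover have "e * e = e * p - C *\<^sub>R (e * r)"
    using f_pprt_mult_self[of "p - C *\<^sub>R r"] by (simp add: e_def algebra_simps)
  ultimately have "e = 0"
    by (simp add: square_le_0_imp_eq_0[OF semiprime])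
  then show ?thesis
    by (simp add: e_def p_def C_def lgroup.le_zero_iff_zero_pprt[symmetric])
qed

lemma eq_0_if_le_mult_annihilated:
  assumes c: "0 \<le> c" and "c \<le> u * s" and "(c * c) * s = (0::'a)"
  shows "c = 0"
proof -
  have cc: "0 \<le> c * c" by (rule f_square_nonneg)
  have "c * (c * c) = (c * c) * c" by (simp add: mult.assoc)
  also have "\<dots> \<le> (c * c) * (u * s)" using assms(2) cc by (rule f_mult_left_mono)
  also have "\<dots> = u * ((c * c) * s)" by (simp add: f_mult_commute f_mult_left_commute mult.assoc)
  finally have "c * (c * c) \<le> 0" using assms(3) by simp
  then have "c * (c * c) = 0" using f_mult_nonneg[OF c cc] by (rule antisym)
  then show ?thesis by (rule cube_eq_0_imp_eq_0[OF semiprime])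
qed

lemma twice_mult_le_if_add_square_mult_le:
  assumes w: "0 \<le> w" and q: "0 \<le> q" and le: "q + (w * w) * q \<le> (w::'a)"
  shows "2 *\<^sub>R (w * q) \<le> w"
proof -
  define D where "D = q + (w * w) * q - 2 *\<^sub>R (w * q)"
  define c where "c = - lgroup.nprt D"
  have c: "0 \<le> c" by (simp add: c_def)
  \<comment> \<open>\<open>D * q\<close> is a square, so the negative part \<open>c\<close> of \<open>D\<close> satisfies \<open>c * c * q = 0\<close>\<close>
  have "(w * w * q) * q = (w * q) * (w * q)" "q * (w * q) = (w * q) * q"
    by (simp_all add: mult.assoc f_mult_left_commute)
  then have "D * q = (q - w * q) * (q - w * q)"
    by (simp add: D_def algebra_simps scaleR_2)
  then have "0 \<le> c * (D * q)" using c by (simp add: f_mult_nonneg f_square_nonneg)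
  also have "c * (D * q) = - ((c * c) * q)"
    by (simp add: c_def f_nprt_mult_self flip: mult.assoc)
  finally have ccq: "(c * c) * q = 0"
    using f_mult_nonneg[OF f_square_nonneg q, of c] by simp
  have "c \<le> (2 *\<^sub>R w) * q"
  proof -
    have "- q \<le> (w * w) * q"
      using q f_mult_nonneg[OF f_square_nonneg q, of w] by (meson neg_le_0_iff_le order_trans)
    then show ?thesis
      unfolding c_def lgroup.nprt_def lgroup.neg_inf_eq_sup D_def
      using w q by (simp add: f_mult_nonneg scaleR_nonneg_nonneg)
  qed
  then have "c = 0" using ccq by (rule eq_0_if_le_mult_annihilated[OF c])
  then have "0 \<le> D" by (simp add: c_def lgroup.zero_le_iff_zero_nprt)
  then show ?thesis using le by (simp add: D_def)
qed

lemma square_le_self_if_add_square_mult_le: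
  assumes w: "0 \<le> w" and q: "0 \<le> q" and le: "q + (w * w) * q \<le> (w::'a)"
  shows "q * q \<le> q"
proof -
  have wq: "2 *\<^sub>R (w * q) \<le> w" using w q le by (rule twice_mult_le_if_add_square_mult_le)
  have q_le_w: "q \<le> w" using le f_mult_nonneg[OF f_square_nonneg q, of w]
    by (meson add_increasing2 order_refl order_trans)
  define e where "e = lgroup.pprt (q * q - q)"
  have e: "0 \<le> e" by (simp add: e_def)
  have eqq: "e * (q * q) = e * q + e * e"
    using f_pprt_mult_self[of "q * q - q"] by (simp add: e_def algebra_simps)
  have eq: "0 \<le> e * q" using e q by (rule f_mult_nonneg)
  have "2 *\<^sub>R (w * (e * q) + w * (e * e)) = 2 *\<^sub>R (w * (e * (q * q)))"
    by (simp only: eqq distrib_left)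
  also have "\<dots> = (e * q) * (2 *\<^sub>R (w * q))"
    by (simp add: f_mult_commute f_mult_left_commute mult.assoc)
  also have "\<dots> \<le> (e * q) * w" using wq eq by (rule f_mult_left_mono)
  also have "\<dots> = w * (e * q)" by (rule f_mult_commute)
  finally have "w * (e * q) + 2 *\<^sub>R (w * (e * e)) \<le> 0"
    by (simp add: scaleR_2 algebra_simps)
  moreover have nonneg: "0 \<le> w * (e * q)" "0 \<le> 2 *\<^sub>R (w * (e * e))"
    using w eq f_mult_nonneg[OF w f_square_nonneg[of e]]
    by (simp_all add: f_mult_nonneg scaleR_nonneg_nonneg)
  ultimately have "w * (e * q) + 2 *\<^sub>R (w * (e * e)) = 0"
    by (meson add_nonneg_nonneg antisym)
  then have "2 *\<^sub>R (w * (e * e)) = 0"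
    using add_nonneg_eq_0_iff[OF nonneg] by blast
  then have ee: "(e * e) * w = 0"
    by (simp add: f_mult_commute[of _ w])
  have "e \<le> q * q"
    unfolding e_def using q by (simp add: pprt_diff_le f_square_nonneg)
  also have "\<dots> \<le> q * w"
    using q_le_w q by (rule f_mult_left_mono)
  finally have "e = 0"
    using ee by (rule eq_0_if_le_mult_annihilated[OF e])
  then show ?thesis
    using lgroup.le_zero_iff_zero_pprt[of "q * q - q"] by (simp add: e_def)
qed

context
  assumes dedekind_complete: "dedekind_complete_on (UNIV :: 'a set)"
begin

lemma add_mult_le_if_least_upper_bound:
  assumes v: "0 \<le> v"
    and ub: "\<And>z. 0 \<le> z \<Longrightarrow> z + v * z \<le> y \<Longrightarrow> z \<le> q"
    and least: "\<And>u. (\<And>z. 0 \<le> z \<Longrightarrow> z + v * z \<le> y \<Longrightarrow> z \<le> u) \<Longrightarrow> q \<le> u"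
  shows "q + v * q \<le> (y::'a)"
proof -
  define d where "d = lgroup.pprt (q + v * q - y)"
  have d: "0 \<le> d" by (simp add: d_def)
  have d_le: "d \<le> (q - z) + v * (q - z)" if "0 \<le> z" "z + v * z \<le> y" for z
  proof -
    have "0 \<le> (q - z) + v * (q - z)"
      using ub[OF that] v by (simp add: f_mult_nonneg)
    moreover have "q + v * q - y \<le> (q - z) + v * (q - z)"
      using that(2) by (simp add: algebra_simps)
    ultimately show ?thesis
      by (simp add: d_def lgroup.pprt_def)
  qed
  have "real n *\<^sub>R d \<le> v * d" for n
  proof -
    define p where "p = lgroup.pprt (real n *\<^sub>R d - v * d)"
    define C where "C = real n * (real n + 1) + 1" \<comment> \<open>positive also for \<open>n = 0\<close>\<close>
    have C: "0 < C" unfolding C_def by (intro add_nonneg_pos mult_nonneg_nonneg) simp_all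
    have "z \<le> q - p /\<^sub>R C" if "0 \<le> z" "z + v * z \<le> y" for z
    proof -
      have qz: "0 \<le> q - z" using ub[OF that] by simp
      have "p \<le> (real n * (real n + 1)) *\<^sub>R (q - z)"
        unfolding p_def using d v qz d_le[OF that] by (rule pprt_scaleR_diff_mult_le) simp
      also have "\<dots> \<le> C *\<^sub>R (q - z)"
        using qz by (intro scaleR_right_mono) (simp_all add: C_def)
      finally have "p /\<^sub>R C \<le> q - z"
        using C by (simp add: pos_divideR_le_eq)
      then show ?thesis
        by (simp add: algebra_simps)
    qed
    then have "q \<le> q - p /\<^sub>R C" by (rule least)
    then have "p \<le> 0"
      using C by (simp add: pos_divideR_le_eq)
    then show ?thesis
      by (simp add: p_def pprt_le_0_iff)
  qed
  then have "d = 0"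
    by (rule archimedean_eq_0[OF d])
  then have "lgroup.pprt (q + v * q - y) \<le> 0"
    by (simp add: d_def)
  then show ?thesis
    by (simp add: pprt_le_0_iff)
qed

lemma add_mult_eq_if_upper_bound:
  assumes v: "0 \<le> v" and q: "0 \<le> q"
    and ub: "\<And>z. 0 \<le> z \<Longrightarrow> z + v * z \<le> y \<Longrightarrow> z \<le> q"
    and le: "q + v * q \<le> (y::'a)"
  shows "q + v * q = y"
proof -
  define g where "g = y - (q + v * q)"
  have g: "0 \<le> g" using le by (simp add: g_def)
  have "real n *\<^sub>R g \<le> v * g" for n
  proof -
    define h where "h = lgroup.pprt (real n *\<^sub>R g - v * g)"
    define C where "C = (1 + real n) * real n + 1"
    have C: "0 < C" unfolding C_def by (intro add_nonneg_pos mult_nonneg_nonneg) simp_all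
    have h: "0 \<le> h" "v * h \<le> real n *\<^sub>R h" "h \<le> real n *\<^sub>R g"
      unfolding h_def using g v
      by (simp_all add: mult_pprt_le_scaleR_pprt pprt_diff_le f_mult_nonneg scaleR_nonneg_nonneg)
    have "h + v * h \<le> (1 + real n) *\<^sub>R h"
      using h(2) by (simp add: algebra_simps)
    also have "\<dots> \<le> (1 + real n) *\<^sub>R (real n *\<^sub>R g)"
      using h(3) by (rule scaleR_left_mono) simp
    also have "\<dots> = ((1 + real n) * real n) *\<^sub>R g"
      by simp
    also have "\<dots> \<le> C *\<^sub>R g"
      using g by (intro scaleR_right_mono) (simp_all add: C_def)
    finally have "(h + v * h) /\<^sub>R C \<le> g"
      using C by (simp add: pos_divideR_le_eq)
    then have "(q + h /\<^sub>R C) + v * (q + h /\<^sub>R C) \<le> y"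
      by (simp add: g_def algebra_simps)
    moreover have "0 \<le> q + h /\<^sub>R C"
      using q h(1) C by (simp add: scaleR_nonneg_nonneg)
    ultimately have "q + h /\<^sub>R C \<le> q" by (rule ub[rotated])
    then have "h \<le> 0"
      using C by (simp add: pos_divideR_le_eq)
    then show ?thesis
      by (simp add: h_def pprt_le_0_iff)
  qed
  then have "g = 0"
    by (rule archimedean_eq_0[OF g])
  then show ?thesis
    by (simp add: g_def)
qed

lemma exists_add_mult_eq:
  assumes v: "0 \<le> v" and y: "0 \<le> y"
  obtains q where "0 \<le> q" "q + v * q = (y::'a)"
proof -
  define S where "S = {z. 0 \<le> z \<and> z + v * z \<le> y}"
  have "0 \<in> S" using y by (simp add: S_def)
  moreover have "z \<le> y" if "z \<in> S" for z
    using that f_mult_nonneg[OF v, of z]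
    by (auto simp: S_def intro: order_trans[rotated] add_increasing2)
  ultimately obtain q where ub: "\<And>z. z \<in> S \<Longrightarrow> z \<le> q"
    and least: "\<And>u. (\<And>z. z \<in> S \<Longrightarrow> z \<le> u) \<Longrightarrow> q \<le> u"
    using dedekind_complete unfolding dedekind_complete_on_def
    by (metis UNIV_I empty_iff subset_UNIV)
  have q: "0 \<le> q" using ub[OF \<open>0 \<in> S\<close>] .
  have "q + v * q \<le> y"
    using v by (rule add_mult_le_if_least_upper_bound) (auto simp: S_def intro: ub least)
  then have "q + v * q = y"
    using v q by (intro add_mult_eq_if_upper_bound) (auto simp: S_def intro: ub)
  with q show ?thesis by (rule that)
qed

lemma intermediate_algebra_mem_if_le_vabs:
  assumes B: "intermediate_algebra B" and x: "x \<in> B" and y: "0 \<le> y" "y \<le> vabs x"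
  shows "(y::'a) \<in> B"
proof -
  obtain q where q: "0 \<le> q" and qy: "q + (x * x) * q = y"
    using exists_add_mult_eq[OF f_square_nonneg y(1)] .
  have "q + (vabs x * vabs x) * q \<le> vabs x"
    using qy y(2) by (simp add: f_vabs_square)
  then have "q * q \<le> q"
    by (rule square_le_self_if_add_square_mult_le[OF lgroup.abs_ge_zero q])
  then have "q \<in> bounded_elements"
    using q by (intro bounded_elementsI)
  then have "q \<in> B"
    using B by (auto simp: intermediate_algebra_def)
  then show ?thesis
    using B x qy by (auto simp: intermediate_algebra_def subalgebra_def)
qed

end

end

end

end

lemma order_idealI:
  fixes B :: "'a::{real_algebra,ordered_real_vector,lattice} set"
  assumes B: "subalgebra B" and nonneg: "\<And>x y. x \<in> B \<Longrightarrow> 0 \<le> y \<Longrightarrow> y \<le> vabs x \<Longrightarrow> y \<in> B"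
  shows "order_ideal B"
  unfolding order_ideal_def
proof (intro conjI ballI allI impI)
  show "0 \<in> B" "\<And>x y. x \<in> B \<Longrightarrow> y \<in> B \<Longrightarrow> x + y \<in> B" "\<And>c x. x \<in> B \<Longrightarrow> c *\<^sub>R x \<in> B"
    using B by (simp_all add: subalgebra_def)
  fix x y
  assume x: "x \<in> B" and le: "vabs y \<le> vabs x"
  have "lgroup.pprt y \<le> vabs y" "- lgroup.nprt y \<le> vabs y"
    by (simp_all add: lgroup.abs_prts)
  then have "lgroup.pprt y \<in> B" "- lgroup.nprt y \<in> B"
    using le by (auto intro: nonneg[OF x] order_trans)
  then have "lgroup.pprt y + (-1) *\<^sub>R (- lgroup.nprt y) \<in> B"
    using B unfolding subalgebra_def by blast
  then show "y \<in> B"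
    by (simp flip: lgroup.prts)
qed

lemma order_ideal_mem_if_vabs_le_add:
  fixes B :: "'a::{real_algebra,ordered_real_vector,lattice} set"
  assumes B: "order_ideal B" and "a \<in> B" "b \<in> B" and le: "vabs y \<le> vabs a + vabs b"
  shows "y \<in> B"
proof -
  have solid: "\<And>x y. x \<in> B \<Longrightarrow> vabs y \<le> vabs x \<Longrightarrow> y \<in> B"
    and add: "\<And>x y. x \<in> B \<Longrightarrow> y \<in> B \<Longrightarrow> x + y \<in> B"
    using B by (simp_all add: order_ideal_def)
  have "vabs a \<in> B" "vabs b \<in> B"
    using solid[OF assms(2), of "vabs a"] solid[OF assms(3), of "vabs b"] by simp_all
  then have "vabs a + vabs b \<in> B"
    by (rule add)
  moreover have "vabs y \<le> vabs (vabs a + vabs b)"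
    using le by (simp add: lgroup.abs_of_nonneg)
  ultimately show ?thesis
    by (rule solid)
qed

lemma f_algebra_on_if_order_ideal:
  fixes B :: "'a::{real_algebra,ordered_real_vector,lattice} set"
  assumes "f_algebra_on (UNIV :: 'a set)" "subalgebra B" "order_ideal B"
  shows "f_algebra_on B"
proof -
  have "inf a b \<in> B \<and> sup a b \<in> B" if "a \<in> B" "b \<in> B" for a b
    using order_ideal_mem_if_vabs_le_add[OF assms(3) that] vabs_inf_le vabs_sup_le by blast
  then show ?thesis
    using assms(1,2) unfolding f_algebra_on_def by simp
qed

lemma dedekind_complete_on_if_order_ideal:
  fixes B :: "'a::{real_algebra,ordered_real_vector,lattice} set"
  assumes complete: "dedekind_complete_on (UNIV :: 'a set)" and B: "order_ideal B"
  shows "dedekind_complete_on B"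
  unfolding dedekind_complete_on_def
proof (intro allI impI)
  fix X
  assume X: "X \<subseteq> B" "X \<noteq> {} \<and> (\<exists>u\<in>B. \<forall>x\<in>X. x \<le> u)"
  then obtain u x where u: "u \<in> B" "\<forall>x\<in>X. x \<le> u" and x: "x \<in> X"
    by blast
  have "X \<noteq> {} \<and> (\<exists>u\<in>UNIV. \<forall>x\<in>X. x \<le> u)"
    using X(2) by blast
  then have "\<exists>s\<in>UNIV. (\<forall>x\<in>X. x \<le> s) \<and> (\<forall>u\<in>UNIV. (\<forall>x\<in>X. x \<le> u) \<longrightarrow> s \<le> u)"
    by (rule complete[unfolded dedekind_complete_on_def, rule_format, OF subset_UNIV])
  then obtain s where ub: "\<forall>x\<in>X. x \<le> s" and least: "\<And>u. \<forall>x\<in>X. x \<le> u \<Longrightarrow> s \<le> u"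
    by blast
  have "vabs s \<le> vabs x + vabs u"
    using ub x least[OF u(2)] by (intro vabs_le_if_between) simp_all
  moreover have "x \<in> B"
    using X(1) x by blast
  ultimately have "s \<in> B"
    using order_ideal_mem_if_vabs_le_add[OF B _ u(1)] by blast
  then show "\<exists>s\<in>B. (\<forall>x\<in>X. x \<le> s) \<and> (\<forall>u\<in>B. (\<forall>x\<in>X. x \<le> u) \<longrightarrow> s \<le> u)"
    using ub least by blast
qed

theorem corollary10:
  fixes B :: "'a::{real_algebra, ordered_real_vector, lattice} set"
  assumes "f_algebra_on (UNIV :: 'a set)"
    and "archimedean_on (UNIV :: 'a set)"
    and "semiprime_on (UNIV :: 'a set)"
    and "dedekind_complete_on (UNIV :: 'a set)"
    and "intermediate_algebra B"
  shows "order_ideal B \<and> f_algebra_on B \<and> semiprime_on B \<and> dedekind_complete_on B"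
proof -
  have sub: "subalgebra B"
    using assms(5) by (simp add: intermediate_algebra_def)
  have ideal: "order_ideal B"
    using sub intermediate_algebra_mem_if_le_vabs[OF assms] by (rule order_idealI)
  have "f_algebra_on B"
    using assms(1) sub ideal by (rule f_algebra_on_if_order_ideal)
  moreover have "semiprime_on B"
    using assms(3) by (simp add: semiprime_on_def)
  moreover have "dedekind_complete_on B"
    using assms(4) ideal by (rule dedekind_complete_on_if_order_ideal)
  ultimately show ?thesis
    using ideal by blast
qed

end
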